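(* Let $F_t$, $t\in[0,1]$, be a one-parameter family on a complete metric space $(\mathbb X,d)$ satisfying (H1) and (H2), and suppose $f_{(i_*,1)}$ is an isometry for some $i_*\in\{1,\dots,N\}$. (a) If an upper transition attractor $A^\bullet$ exists, then $f_{(i_*,1)}(A^\bullet)=A^\bullet$. (b) If moreover (H3) holds and the lower transition attractor $A_\bullet$ exists and is compact, then $f_{(i_*,1)}(A_\bullet)=A_\bullet$.
   Context: Let $(\mathbb X,d)$ be a complete metric space. A one-parameter family is $F_t=\{f_{(1,t)},\dots,f_{(N,t)}\}$, $t\in[0,1]$, $N\ge2$, of continuous self-maps of $\mathbb X$. $\mathrm{Lip}(f,d)=\sup_{x\ne y}d(f(x),f(y))/d(x,y)$ and $\mathrm{Lip}(F_t,d)=\max_i\mathrm{Lip}(f_{(i,t)},d)$. Conditions: (H1) for every $x\in\mathbb X$ and every $i$, the map $t\mapsto f_{(i,t)}(x)$ is continuous on $[0,1]$; (H2) $\mathrm{Lip}(F_t,d)<1$ for all $t\in[0,1)$; (H3) for each $i$ the limit $q_i=\lim_{t\to1^-}q_{i,t}$ exists, where $q_{i,t}$ is the unique fixed point of $f_{(i,t)}$ for $t\in[0,1)$; $Q=\{q_1,\dots,q_N\}$. For an IFS $F$ and $S\subseteq\mathbb X$, $F(S)=\overline{\bigcup_{f\in F}f(S)}$. For $t\in[0,1)$, $A_t$ is the attractor of $F_t$, the unique nonempty compact set with $F_t(A_t)=A_t$. With $h$ the Hausdorff metric, an upper transition attractor is a compact set $A^\bullet$ for which there is an increasing sequence $t_n\in[0,1)$,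 $t_n\to1$, with $h(A_{t_n},A^\bullet)\to0$. The lower transition attractor is the smallest (w.r.t. inclusion) set $A_\bullet$ with $F_1(A_\bullet)=A_\bullet$ and $Q\subseteq A_\bullet$. *)

theory Defs
  imports "HOL-Analysis.Analysis"
begin

text \<open>A one-parameter family is given by f :: nat => real => 'a => 'a,
  where f i t is the map f_(i,t), for i in {1..N} and t in [0,1].\<close>

definition Lip :: "('a::metric_space \<Rightarrow> 'a) \<Rightarrow> ereal" where
  "Lip g = (SUP p \<in> {(x,y). x \<noteq> y}. ereal (dist (g (fst p)) (g (snd p)) / dist (fst p) (snd p)))"

definition LipF :: "(nat \<Rightarrow> real \<Rightarrow> 'a::metric_space \<Rightarrow> 'a) \<Rightarrow> nat \<Rightarrow> real \<Rightarrow> ereal" where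
  "LipF f N t = Max ((\<lambda>i. Lip (f i t)) ` {1..N})"

definition hutch :: "(nat \<Rightarrow> real \<Rightarrow> 'a::metric_space \<Rightarrow> 'a) \<Rightarrow> nat \<Rightarrow> real \<Rightarrow> 'a set \<Rightarrow> 'a set" where
  "hutch f N t S = closure (\<Union>i\<in>{1..N}. f i t ` S)"

definition attractor :: "(nat \<Rightarrow> real \<Rightarrow> 'a::metric_space \<Rightarrow> 'a) \<Rightarrow> nat \<Rightarrow> real \<Rightarrow> 'a set" where
  "attractor f N t = (THE A. A \<noteq> {} \<and> compact A \<and> hutch f N t A = A)"

definition hausdist :: "'a::metric_space set \<Rightarrow> 'a set \<Rightarrow> real" where
  "hausdist A B = max (SUP a\<in>A. infdist a B) (SUP b\<in>B. infdist b A)"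

definition upper_TA :: "(nat \<Rightarrow> real \<Rightarrow> 'a::metric_space \<Rightarrow> 'a) \<Rightarrow> nat \<Rightarrow> 'a set \<Rightarrow> bool" where
  "upper_TA f N A \<longleftrightarrow> compact A \<and>
     (\<exists>tn::nat \<Rightarrow> real. mono tn \<and> (\<forall>n. 0 \<le> tn n \<and> tn n < 1) \<and> tn \<longlonglongrightarrow> 1 \<and>
        (\<lambda>n. hausdist (attractor f N (tn n)) A) \<longlonglongrightarrow> 0)"

definition fixpt :: "(nat \<Rightarrow> real \<Rightarrow> 'a \<Rightarrow> 'a) \<Rightarrow> nat \<Rightarrow> real \<Rightarrow> 'a" where
  "fixpt f i t = (THE x. f i t x = x)"

definition H1 :: "(nat \<Rightarrow> real \<Rightarrow> 'a::topological_space \<Rightarrow> 'a) \<Rightarrow> nat \<Rightarrow> bool" where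
  "H1 f N \<longleftrightarrow> (\<forall>x. \<forall>i\<in>{1..N}. continuous_on {0..1} (\<lambda>t. f i t x))"

definition H2 :: "(nat \<Rightarrow> real \<Rightarrow> 'a::metric_space \<Rightarrow> 'a) \<Rightarrow> nat \<Rightarrow> bool" where
  "H2 f N \<longleftrightarrow> (\<forall>t\<in>{0..<1}. LipF f N t < 1)"

definition H3 :: "(nat \<Rightarrow> real \<Rightarrow> 'a::topological_space \<Rightarrow> 'a) \<Rightarrow> nat \<Rightarrow> bool" where
  "H3 f N \<longleftrightarrow> (\<forall>i\<in>{1..N}. \<exists>q. ((\<lambda>t. fixpt f i t) \<longlongrightarrow> q) (at_left 1))"

definition Qset :: "(nat \<Rightarrow> real \<Rightarrow> 'a::metric_space \<Rightarrow> 'a) \<Rightarrow> nat \<Rightarrow> 'a set" where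
  "Qset f N = (\<lambda>i. Lim (at_left 1) (fixpt f i)) ` {1..N}"

definition lower_TA :: "(nat \<Rightarrow> real \<Rightarrow> 'a::metric_space \<Rightarrow> 'a) \<Rightarrow> nat \<Rightarrow> 'a set \<Rightarrow> bool" where
  "lower_TA f N A \<longleftrightarrow> hutch f N 1 A = A \<and> Qset f N \<subseteq> A \<and>
     (\<forall>B. hutch f N 1 B = B \<and> Qset f N \<subseteq> B \<longrightarrow> A \<subseteq> B)"

definition isometry :: "('a::metric_space \<Rightarrow> 'a) \<Rightarrow> bool" where
  "isometry g \<longleftrightarrow> (\<forall>x y. dist (g x) (g y) = dist x y)"

end

theory Submission
  imports Defs
begin

(* For t < 1 the attractor A_t exists by Hutchinson's theorem, and f_(i*,t) maps A_t into itself
   without expanding distances. Along t_n \<rightarrow> 1 the maps converge pointwise by (H1) and A_(t_n)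
   converges to A\<^sup>\<bullet> in the Hausdorff distance, so f_(i*,1) maps A\<^sup>\<bullet> into itself; for A\<^sub>\<bullet>
   this is immediate from F_1(A\<^sub>\<bullet>) = A\<^sub>\<bullet>. Finally, an isometry g mapping a compact set K into
   itself is onto: a point a \<notin> g(K) has positive distance from g(K), yet some iterate g^k(a),
   k \<ge> 1, returns arbitrarily close to a. *)

lemma compact_closure_of_finite_cball_covers:
  fixes U :: "'a::complete_space set"
  assumes "\<And>e. e > 0 \<Longrightarrow> \<exists>k. finite k \<and> U \<subseteq> (\<Union>x\<in>k. cball x e)"
  shows "compact (closure U)"
  unfolding compact_eq_totally_bounded
proof (intro conjI allI impI)
  show "complete (closure U)" by (simp add: complete_eq_closed)
  fix e :: real assume "e > 0"
  then obtain k where k: "finite k" "U \<subseteq> (\<Union>x\<in>k. cball x (e/2))"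
    using assms[of "e/2"] by auto
  have "closure U \<subseteq> (\<Union>x\<in>k. cball x (e/2))"
    using k by (intro closure_minimal closed_UN) auto
  also have "\<dots> \<subseteq> (\<Union>x\<in>k. ball x e)"
    using \<open>e > 0\<close> by auto
  finally show "\<exists>k. finite k \<and> closure U \<subseteq> (\<Union>x\<in>k. ball x e)"
    using k(1) by blast
qed

lemma infdist_image_le:
  fixes g :: "'a::metric_space \<Rightarrow> 'a"
  assumes g: "c-lipschitz_on UNIV g" and inv: "g ` A \<subseteq> A"
  shows "infdist (g x) A \<le> c * infdist x A"
proof (cases "A = {}")
  case True then show ?thesis by (simp add: infdist_def)
next
  case False
  then obtain a0 where a0: "a0 \<in> A" by blast
  show ?thesis
  proof (cases "c = 0")
    case True
    then have "g x = g a0" using lipschitz_onD[OF g, of x a0] by simp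
    then show ?thesis using True inv a0 by auto
  next
    case False
    then have "0 < c" using lipschitz_on_nonneg[OF g] by simp
    have "infdist (g x) A / c \<le> infdist x A"
      unfolding infdist_notempty[OF \<open>A \<noteq> {}\<close>, of x]
    proof (rule cINF_greatest[OF \<open>A \<noteq> {}\<close>])
      fix a assume "a \<in> A"
      then have "infdist (g x) A \<le> dist (g x) (g a)" using inv by (intro infdist_le) auto
      also have "\<dots> \<le> c * dist x a" using lipschitz_onD[OF g] by simp
      finally show "infdist (g x) A / c \<le> dist x a"
        using \<open>0 < c\<close> by (simp add: divide_le_eq mult.commute)
    qed
    then show ?thesis using \<open>0 < c\<close> by (simp add: divide_le_eq mult.commute)
  qed
qed

locale contracting_IFS =
  fixes I :: "'i set" and \<phi> :: "'i \<Rightarrow> 'a::complete_space \<Rightarrow> 'a" and c :: real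
  assumes finite_index: "finite I" and index_nonempty: "I \<noteq> {}"
    and lipschitz: "i \<in> I \<Longrightarrow> c-lipschitz_on UNIV (\<phi> i)"
    and contraction_less_1: "c < 1"
begin

definition image_union :: "'a set \<Rightarrow> 'a set" where
  "image_union X = (\<Union>i\<in>I. \<phi> i ` X)"

lemma contraction_nonneg: "0 \<le> c"
  using index_nonempty lipschitz lipschitz_on_nonneg by blast

lemma dist_le: "i \<in> I \<Longrightarrow> dist (\<phi> i x) (\<phi> i y) \<le> c * dist x y"
  using lipschitz lipschitz_onD by blast

lemma mono_image_union: "mono image_union"
  unfolding image_union_def by (rule monoI) blast

lemma image_union_UN: "image_union (\<Union>n. X n) = (\<Union>n. image_union (X n))"
  unfolding image_union_def by blast

lemma image_union_near:
  assumes "X \<subseteq> (\<Union>y\<in>Y. cball y r)"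
  shows "image_union X \<subseteq> (\<Union>y\<in>image_union Y. cball y (c * r))"
proof
  fix z assume "z \<in> image_union X"
  then obtain i x where i: "i \<in> I" and x: "x \<in> X" and z: "z = \<phi> i x"
    unfolding image_union_def by blast
  obtain y where y: "y \<in> Y" "dist y x \<le> r" using x assms by auto
  have "dist (\<phi> i y) z \<le> c * r"
    using dist_le[OF i, of y x] mult_left_mono[OF y(2) contraction_nonneg] z by simp
  moreover have "\<phi> i y \<in> image_union Y" using i y(1) unfolding image_union_def by blast
  ultimately show "z \<in> (\<Union>y\<in>image_union Y. cball y (c * r))" by auto
qed

lemma funpow_image_union_near:
  assumes "X \<subseteq> (\<Union>y\<in>Y. cball y r)"
  shows "(image_union ^^ n) X \<subseteq> (\<Union>y\<in>(image_union ^^ n) Y. cball y (c ^ n * r))"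
proof (induction n)
  case 0 then show ?case using assms by simp
next
  case (Suc n)
  then show ?case using image_union_near[OF Suc] by (simp add: mult.assoc)
qed

lemma invariant_subset:
  assumes B: "compact B" "B \<noteq> {}" "B \<subseteq> closure (image_union B)"
    and A: "closed A" "A \<noteq> {}" "image_union A \<subseteq> A"
  shows "B \<subseteq> A"
proof -
  obtain b0 where b0: "b0 \<in> B" "\<And>b. b \<in> B \<Longrightarrow> infdist b A \<le> infdist b0 A"
    using continuous_attains_sup[OF B(1,2) continuous_on_infdist[OF continuous_on_id]] by blast
  define r where "r = infdist b0 A"
  \<comment> \<open>r is the largest distance of a point of B from A; invariance of B forces r \<le> c * r.\<close>
  have "image_union B \<subseteq> {y. infdist y A \<le> c * r}"
  proof
    fix y assume "y \<in> image_union B"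
    then obtain i b where i: "i \<in> I" and b: "b \<in> B" and y: "y = \<phi> i b"
      unfolding image_union_def by blast
    have "\<phi> i ` A \<subseteq> A" using A(3) i unfolding image_union_def by blast
    then have "infdist y A \<le> c * infdist b A"
      unfolding y by (rule infdist_image_le[OF lipschitz[OF i]])
    also have "\<dots> \<le> c * r"
      unfolding r_def by (rule mult_left_mono[OF b0(2)[OF b] contraction_nonneg])
    finally show "y \<in> {y. infdist y A \<le> c * r}" by simp
  qed
  then have "closure (image_union B) \<subseteq> {y. infdist y A \<le> c * r}"
    by (intro closure_minimal closed_Collect_le continuous_intros continuous_on_infdist)
  then have "r \<le> c * r" using B(3) b0(1) unfolding r_def by blast
  then have "r = 0"
    using contraction_less_1 infdist_nonneg[of b0 A] unfolding r_def
    by (smt (verit) mult_le_cancel_right1)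
  then have "infdist b A = 0" if "b \<in> B" for b
    using b0(2)[OF that] infdist_nonneg[of b A] unfolding r_def by linarith
  then show ?thesis using in_closed_iff_infdist_zero[OF A(1,2)] by blast
qed

lemma image_union_closure_eq:
  assumes "image_union U = U"
  shows "closure (image_union (closure U)) = closure U"
proof
  have "\<phi> i ` closure U \<subseteq> closure U" if "i \<in> I" for i
  proof (rule image_closure_subset)
    show "continuous_on (closure U) (\<phi> i)"
      using lipschitz_on_continuous_on[OF lipschitz[OF that]] by (rule continuous_on_subset) simp
    show "\<phi> i ` U \<subseteq> closure U"
      using assms that closure_subset unfolding image_union_def by blast
  qed simp
  then show "closure (image_union (closure U)) \<subseteq> closure U"
    unfolding image_union_def by (intro closure_minimal) auto
  have "U \<subseteq> image_union (closure U)"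
    using assms closure_subset unfolding image_union_def by blast
  then show "closure U \<subseteq> closure (image_union (closure U))"
    by (rule closure_mono)
qed

context
  fixes i0 x0 assumes i0: "i0 \<in> I" and fixed: "\<phi> i0 x0 = x0"
begin

lemma orbit_mono: "m \<le> n \<Longrightarrow> (image_union ^^ m) {x0} \<subseteq> (image_union ^^ n) {x0}"
proof (rule lift_Suc_mono_le)
  have "{x0} \<subseteq> image_union {x0}" using i0 fixed unfolding image_union_def by force
  then have "(image_union ^^ n) {x0} \<subseteq> (image_union ^^ n) (image_union {x0})" for n
    by (rule funpow_mono[OF mono_image_union])
  then show "(image_union ^^ n) {x0} \<subseteq> (image_union ^^ Suc n) {x0}" for n
    by (simp only: funpow_Suc_right comp_apply)
qed

lemma image_union_orbit:
  "image_union (\<Union>n. (image_union ^^ n) {x0}) = (\<Union>n. (image_union ^^ n) {x0})"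
proof -
  have "image_union (\<Union>n. (image_union ^^ n) {x0}) = (\<Union>n. (image_union ^^ Suc n) {x0})"
    unfolding image_union_UN by simp
  also have "\<dots> = (\<Union>n. (image_union ^^ n) {x0})"
  proof -
    have "(image_union ^^ n) {x0} \<subseteq> (image_union ^^ Suc n) {x0}" for n
      by (rule orbit_mono) simp
    then show ?thesis by blast
  qed
  finally show ?thesis .
qed

lemma orbit_bounded: "\<exists>R. \<forall>n. (image_union ^^ n) {x0} \<subseteq> cball x0 R"
proof
  define R where "R = (\<Sum>i\<in>I. dist (\<phi> i x0) x0) / (1 - c)"
  have "dist x0 (\<phi> i y) \<le> R" if i: "i \<in> I" and y: "dist x0 y \<le> R" for i y
  proof -
    have "dist x0 (\<phi> i y) \<le> dist (\<phi> i x0) x0 + dist (\<phi> i x0) (\<phi> i y)"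
      by (rule dist_triangle3)
    also have "\<dots> \<le> (\<Sum>i\<in>I. dist (\<phi> i x0) x0) + c * R"
      using member_le_sum[OF i _ finite_index, of "\<lambda>i. dist (\<phi> i x0) x0"]
        dist_le[OF i, of x0 y] mult_left_mono[OF y contraction_nonneg] by simp
    also have "\<dots> = R" unfolding R_def using contraction_less_1 by (simp add: field_simps)
    finally show ?thesis .
  qed
  then have invariant: "image_union (cball x0 R) \<subseteq> cball x0 R"
    unfolding image_union_def by auto
  have "0 \<le> R" unfolding R_def using contraction_less_1 by (simp add: sum_nonneg)
  show "\<forall>n. (image_union ^^ n) {x0} \<subseteq> cball x0 R"
  proof
    fix n show "(image_union ^^ n) {x0} \<subseteq> cball x0 R"
    proof (induction n)
      case (Suc n)
      then show ?case using invariant monoD[OF mono_image_union Suc] by simp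
    qed (use \<open>0 \<le> R\<close> in simp)
  qed
qed

lemma compact_closure_orbit: "compact (closure (\<Union>n. (image_union ^^ n) {x0}))"
proof (rule compact_closure_of_finite_cball_covers)
  fix e :: real assume "e > 0"
  obtain R where R: "\<And>n. (image_union ^^ n) {x0} \<subseteq> cball x0 R"
    using orbit_bounded by blast
  have "0 \<le> R" using R[of 0] by simp
  obtain n where n: "c ^ n < e / (R + 1)"
    using real_arch_pow_inv[of "e / (R + 1)" c] \<open>e > 0\<close> \<open>0 \<le> R\<close> contraction_less_1 by auto
  have "c ^ n * R \<le> c ^ n * (R + 1)"
    using contraction_nonneg by (simp add: mult_left_mono)
  also have "\<dots> < e" using n \<open>0 \<le> R\<close> by (simp add: field_simps)
  finally have small: "c ^ n * R < e" .
  have "(image_union ^^ m) {x0} \<subseteq> (\<Union>y\<in>(image_union ^^ n) {x0}. cball y e)" for m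
  proof (cases "m \<le> n")
    case True
    have "(image_union ^^ n) {x0} \<subseteq> (\<Union>y\<in>(image_union ^^ n) {x0}. cball y e)"
      using \<open>e > 0\<close> by force
    with orbit_mono[OF True] show ?thesis by (rule order_trans)
  next
    case False
    have "(image_union ^^ (m - n)) {x0} \<subseteq> (\<Union>y\<in>{x0}. cball y R)"
      using R by simp
    from funpow_image_union_near[OF this, of n]
    have "(image_union ^^ n) ((image_union ^^ (m - n)) {x0})
      \<subseteq> (\<Union>y\<in>(image_union ^^ n) {x0}. cball y (c ^ n * R))"
      by simp
    moreover have "image_union ^^ n \<circ> image_union ^^ (m - n) = image_union ^^ m"
      using False funpow_add[of n "m - n" image_union] by simp
    ultimately have "(image_union ^^ m) {x0} \<subseteq> (\<Union>y\<in>(image_union ^^ n) {x0}. cball y (c ^ n * R))"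
      by (metis comp_apply)
    then show ?thesis using small by force
  qed
  moreover have "finite ((image_union ^^ n) {x0})"
    by (induction n) (auto simp: image_union_def finite_index)
  ultimately show "\<exists>k. finite k \<and> (\<Union>n. (image_union ^^ n) {x0}) \<subseteq> (\<Union>x\<in>k. cball x e)"
    by blast
qed

end

theorem ex1_invariant_compact: "\<exists>!A. A \<noteq> {} \<and> compact A \<and> closure (image_union A) = A"
proof -
  obtain i0 where i0: "i0 \<in> I" using index_nonempty by blast
  have "\<exists>!x. \<phi> i0 x = x"
    by (rule banach_fix_type[OF contraction_nonneg contraction_less_1]) (intro allI dist_le[OF i0])
  then obtain x0 where x0: "\<phi> i0 x0 = x0" by (rule ex1E)
  define A where "A = closure (\<Union>n. (image_union ^^ n) {x0})"
  have "x0 \<in> (\<Union>n. (image_union ^^ n) {x0})" by (rule UN_I[of 0]) simp_all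
  then have "x0 \<in> A" unfolding A_def by (rule closure_subset[THEN subsetD])
  then have A_ne: "A \<noteq> {}" by blast
  have A_compact: "compact A"
    unfolding A_def by (rule compact_closure_orbit[OF i0 x0])
  have A_inv: "closure (image_union A) = A"
    unfolding A_def by (rule image_union_closure_eq[OF image_union_orbit[OF i0 x0]])
  have sub: "image_union X \<subseteq> X" if "closure (image_union X) = X" for X
    using closure_subset[of "image_union X"] that by simp
  have unique: "B = A" if B: "B \<noteq> {}" "compact B" "closure (image_union B) = B" for B
  proof
    show "B \<subseteq> A"
      using invariant_subset[OF B(2,1) equalityD2[OF B(3)] compact_imp_closed[OF A_compact] A_ne sub[OF A_inv]] .
    show "A \<subseteq> B"
      using invariant_subset[OF A_compact A_ne equalityD2[OF A_inv] compact_imp_closed[OF B(2)] B(1) sub[OF B(3)]] .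
  qed
  show ?thesis
  proof (rule ex1I[of _ A])
    show "A \<noteq> {} \<and> compact A \<and> closure (image_union A) = A"
      using A_ne A_compact A_inv by (intro conjI)
  qed (use unique in blast)
qed

end

lemma isometry_funpow_dist:
  assumes "isometry g"
  shows "dist ((g ^^ (m + k)) a) ((g ^^ m) a) = dist ((g ^^ k) a) a"
proof (induction m)
  case (Suc m)
  then show ?case using assms by (simp add: isometry_def)
qed simp

lemma isometry_image_eq_if_subset:
  fixes g :: "'a::metric_space \<Rightarrow> 'a"
  assumes iso: "isometry g" and K: "compact K" and sub: "g ` K \<subseteq> K"
  shows "g ` K = K"
proof (rule ccontr)
  assume "g ` K \<noteq> K"
  with sub obtain a where a: "a \<in> K" "a \<notin> g ` K" by blast
  have "continuous_on K g"
    using iso unfolding continuous_on_iff isometry_def by metis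
  then have "compact (g ` K)" using K by (rule compact_continuous_image)
  then have gap: "infdist a (g ` K) > 0"
    using a by (intro infdist_pos_not_in_closed compact_imp_closed) auto
  define x where "x n = (g ^^ n) a" for n
  have "x n \<in> K" for n
    unfolding x_def by (induction n) (use a sub in auto)
  then obtain l r where r: "strict_mono r" and lim: "(x \<circ> r) \<longlonglongrightarrow> l"
    using K unfolding compact_def by blast
  from lim have "Cauchy (x \<circ> r)" by (rule LIMSEQ_imp_Cauchy)
  then obtain M where "\<forall>m\<ge>M. \<forall>n\<ge>M. dist ((x \<circ> r) m) ((x \<circ> r) n) < infdist a (g ` K)"
    using gap unfolding Cauchy_def by blast
  then have M: "dist (x (r (Suc M))) (x (r M)) < infdist a (g ` K)" by simp
  define k where "k = r (Suc M) - r M"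
  have "r M < r (Suc M)" using r by (simp add: strict_mono_def)
  then have k: "r (Suc M) = r M + k" "0 < k" unfolding k_def by auto
  \<comment> \<open>The orbit returns within the gap of its starting point, yet every later point lies in g ` K.\<close>
  have "dist (x k) a < infdist a (g ` K)"
    using M isometry_funpow_dist[OF iso, of "r M" k a] k(1) unfolding x_def by simp
  moreover have "x k \<in> g ` K"
  proof -
    obtain j where "k = Suc j" using k(2) by (cases k) auto
    then show ?thesis using \<open>x j \<in> K\<close> unfolding x_def by simp
  qed
  ultimately show False using infdist_le[of "x k" "g ` K" a] by (simp add: dist_commute)
qed

lemma hausdist_commute: "hausdist A B = hausdist B A"
  unfolding hausdist_def by (rule max.commute)

lemma infdist_le_hausdist:
  fixes A :: "'a::metric_space set"
  assumes "compact A" "a \<in> A"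
  shows "infdist a B \<le> hausdist A B"
proof -
  have "bdd_above ((\<lambda>a. infdist a B) ` A)"
    by (intro bounded_imp_bdd_above compact_imp_bounded compact_continuous_image assms(1)
        continuous_on_infdist continuous_on_id)
  then have "infdist a B \<le> (SUP a\<in>A. infdist a B)" using assms(2) by (rule cSUP_upper2) simp
  then show ?thesis unfolding hausdist_def by simp
qed

lemma infdist_attained_compact:
  fixes S :: "'a::metric_space set"
  assumes "compact S" "S \<noteq> {}"
  obtains y where "y \<in> S" "dist x y = infdist x S"
proof -
  have "continuous_on S (dist x)" by (intro continuous_intros)
  then obtain y where y: "y \<in> S" "\<And>z. z \<in> S \<Longrightarrow> dist x y \<le> dist x z"
    using continuous_attains_inf[OF assms] by blast
  have "infdist x S \<le> dist x y" using y(1) by (rule infdist_le)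
  moreover have "dist x y \<le> infdist x S"
    unfolding infdist_notempty[OF assms(2)] by (rule cINF_greatest[OF assms(2) y(2)])
  ultimately have "dist x y = infdist x S" by (rule antisym[rotated])
  with y(1) show thesis by (rule that)
qed

lemma image_subset_if_hausdist_limit:
  fixes g :: "'a::metric_space \<Rightarrow> 'a" and h :: "nat \<Rightarrow> 'a \<Rightarrow> 'a"
  assumes A: "compact A"
    and B: "\<And>n. compact (B n)" "\<And>n. B n \<noteq> {}" "\<And>n. h n ` B n \<subseteq> B n"
    and nonexpanding: "\<And>n. 1-lipschitz_on UNIV (h n)"
    and pointwise: "\<And>x. (\<lambda>n. h n x) \<longlonglongrightarrow> g x"
    and hausdorff: "(\<lambda>n. hausdist (B n) A) \<longlonglongrightarrow> 0"
  shows "g ` A \<subseteq> A"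
proof
  fix b assume "b \<in> g ` A"
  then obtain a where a: "a \<in> A" and b: "b = g a" by blast
  have "\<exists>y. y \<in> B n \<and> dist a y \<le> hausdist (B n) A" for n
  proof -
    obtain y where "y \<in> B n" "dist a y = infdist a (B n)"
      using infdist_attained_compact[OF B(1,2)] by blast
    moreover have "infdist a (B n) \<le> hausdist (B n) A"
      using infdist_le_hausdist[OF A a, of "B n"] hausdist_commute[of A "B n"] by linarith
    ultimately show ?thesis by auto
  qed
  then obtain y where y: "\<And>n. y n \<in> B n" "\<And>n. dist a (y n) \<le> hausdist (B n) A" by metis
  have bound: "infdist (g a) A \<le> 2 * hausdist (B n) A + dist (g a) (h n a)" for n
  proof -
    have "h n (y n) \<in> B n" using B(3) y(1) by blast
    then have "infdist (h n (y n)) A \<le> hausdist (B n) A" by (rule infdist_le_hausdist[OF B(1)])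
    moreover have "dist (g a) (h n (y n)) \<le> dist (g a) (h n a) + dist a (y n)"
      using dist_triangle[of "g a" "h n (y n)" "h n a"] lipschitz_onD[OF nonexpanding, of a "y n" n]
      by simp
    ultimately show ?thesis
      using infdist_triangle[of "g a" A "h n (y n)"] y(2)[of n] by simp
  qed
  have "(\<lambda>n. 2 * hausdist (B n) A + dist (g a) (h n a)) \<longlonglongrightarrow> 2 * 0 + dist (g a) (g a)"
    by (intro tendsto_intros hausdorff pointwise)
  then have "infdist (g a) A \<le> 0"
    using bound by (intro LIMSEQ_le_const) auto
  then have "infdist (g a) A = 0" using infdist_nonneg antisym by blast
  then show "b \<in> A"
    using in_closed_iff_infdist_zero[OF compact_imp_closed[OF A]] a b by blast
qed

lemma lipschitz_on_UNIV_if_Lip_le: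
  fixes g :: "'a::metric_space \<Rightarrow> 'a"
  assumes "Lip g \<le> ereal c" "0 \<le> c"
  shows "c-lipschitz_on UNIV g"
proof (rule lipschitz_onI)
  fix x y :: 'a
  show "dist (g x) (g y) \<le> c * dist x y"
  proof (cases "x = y")
    case False
    have "ereal (dist (g x) (g y) / dist x y) \<le> Lip g"
      unfolding Lip_def using False by (intro SUP_upper2[of "(x, y)"]) auto
    then have "dist (g x) (g y) / dist x y \<le> c" using assms(1) by (metis ereal_less_eq(3) order_trans)
    then show ?thesis using False by (simp add: divide_le_eq mult.commute)
  qed simp
qed fact

lemma Lip_le_LipF: "i \<in> {1..N} \<Longrightarrow> Lip (f i t) \<le> LipF f N t"
  unfolding LipF_def by (intro Max_ge) auto

lemma contracting_IFS_if_H2: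
  assumes "H2 f N" "1 \<le> N" "t \<in> {0..<1}"
  shows "\<exists>c. contracting_IFS {1..N} (\<lambda>i. f i t) c"
proof -
  define L where "L = LipF f N t"
  have "L < 1" using assms unfolding H2_def L_def by auto
  then obtain c where c: "0 \<le> c" "c < 1" "L \<le> ereal c"
  proof (cases L)
    case (real r)
    then show thesis using that[of "max 0 r"] \<open>L < 1\<close> by simp
  qed (use that[of 0] \<open>L < 1\<close> in simp_all)
  moreover have "Lip (f i t) \<le> L" if "i \<in> {1..N}" for i
    unfolding L_def using that by (rule Lip_le_LipF)
  ultimately have "c-lipschitz_on UNIV (f i t)" if "i \<in> {1..N}" for i
    using that c by (intro lipschitz_on_UNIV_if_Lip_le order_trans[OF _ \<open>L \<le> ereal c\<close>]) auto
  then have "contracting_IFS {1..N} (\<lambda>i. f i t) c"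
    using \<open>c < 1\<close> assms(2) by unfold_locales auto
  then show ?thesis ..
qed

lemma attractor_invariant:
  fixes f :: "nat \<Rightarrow> real \<Rightarrow> 'a::complete_space \<Rightarrow> 'a"
  assumes "H2 f N" "1 \<le> N" "t \<in> {0..<1}"
  shows "attractor f N t \<noteq> {} \<and> compact (attractor f N t)
    \<and> hutch f N t (attractor f N t) = attractor f N t"
proof -
  obtain c where "contracting_IFS {1..N} (\<lambda>i. f i t) c"
    using contracting_IFS_if_H2[OF assms] by blast
  then interpret contracting_IFS "{1..N}" "\<lambda>i. f i t" c .
  show ?thesis
    unfolding attractor_def hutch_def
    using theI'[OF ex1_invariant_compact[unfolded image_union_def]] .
qed

lemma image_subset_if_hutch_fixed:
  assumes "hutch f N t A = A" "i \<in> {1..N}"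
  shows "f i t ` A \<subseteq> A"
proof -
  have "f i t ` A \<subseteq> (\<Union>i\<in>{1..N}. f i t ` A)" using assms(2) by blast
  also have "\<dots> \<subseteq> hutch f N t A" unfolding hutch_def by (rule closure_subset)
  finally show ?thesis using assms(1) by simp
qed

lemma nonexpanding_if_H2:
  assumes "H2 f N" "i \<in> {1..N}" "t \<in> {0..<1}"
  shows "1-lipschitz_on UNIV (f i t)"
proof (rule lipschitz_on_UNIV_if_Lip_le)
  have "LipF f N t < 1" using assms(1,3) unfolding H2_def by blast
  then have "Lip (f i t) \<le> 1" using Lip_le_LipF[OF assms(2), of f t] by simp
  then show "Lip (f i t) \<le> ereal 1" by (simp add: one_ereal_def)
qed simp

lemma tendsto_if_H1:
  assumes "H1 f N" "i \<in> {1..N}" "\<And>n. tn n \<in> {0..1}" "tn \<longlonglongrightarrow> 1"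
  shows "(\<lambda>n. f i (tn n) x) \<longlonglongrightarrow> f i 1 x"
proof -
  have "continuous_on {0..1} (\<lambda>t. f i t x)" using assms(1,2) unfolding H1_def by blast
  then show ?thesis
    by (rule continuous_on_tendsto_compose[OF _ assms(4)]) (use assms(3) in auto)
qed

theorem mainTheorem9:
  fixes f :: "nat \<Rightarrow> real \<Rightarrow> 'a::complete_space \<Rightarrow> 'a"
    and N :: nat and istar :: nat
  assumes "N \<ge> 2"
    and "\<forall>i\<in>{1..N}. \<forall>t\<in>{0..1}. continuous_on UNIV (f i t)"
    and "H1 f N"
    and "H2 f N"
    and "istar \<in> {1..N}"
    and "isometry (f istar 1)"
  shows "(\<forall>A. upper_TA f N A \<longrightarrow> f istar 1 ` A = A) \<and>
         (H3 f N \<longrightarrow> (\<forall>A. lower_TA f N A \<and> compact A \<longrightarrow> f istar 1 ` A = A))"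
proof (intro conjI allI impI)
  fix A assume "upper_TA f N A"
  then obtain tn where A: "compact A" and tn: "\<And>n. tn n \<in> {0..<1}" "tn \<longlonglongrightarrow> 1"
    and hausdorff: "(\<lambda>n. hausdist (attractor f N (tn n)) A) \<longlonglongrightarrow> 0"
    unfolding upper_TA_def by auto
  have attractor: "attractor f N (tn n) \<noteq> {}" "compact (attractor f N (tn n))"
    "hutch f N (tn n) (attractor f N (tn n)) = attractor f N (tn n)" for n
    using attractor_invariant[OF assms(4) _ tn(1)] assms(1) by auto
  have "f istar 1 ` A \<subseteq> A"
  proof (rule image_subset_if_hausdist_limit[OF A attractor(2,1) _ _ _ hausdorff])
    show "f istar (tn n) ` attractor f N (tn n) \<subseteq> attractor f N (tn n)" for n
      using attractor(3) assms(5) by (rule image_subset_if_hutch_fixed)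
    show "1-lipschitz_on UNIV (f istar (tn n))" for n
      using assms(4,5) tn(1) by (rule nonexpanding_if_H2)
    show "(\<lambda>n. f istar (tn n) x) \<longlonglongrightarrow> f istar 1 x" for x
      using assms(3,5) _ tn(2) by (rule tendsto_if_H1) (use tn(1) in fastforce)
  qed
  then show "f istar 1 ` A = A" by (rule isometry_image_eq_if_subset[OF assms(6) A])
next
  fix A assume "lower_TA f N A \<and> compact A"
  then have fixed: "hutch f N 1 A = A" and A: "compact A" unfolding lower_TA_def by auto
  from fixed assms(5) have "f istar 1 ` A \<subseteq> A" by (rule image_subset_if_hutch_fixed)
  then show "f istar 1 ` A = A" by (rule isometry_image_eq_if_subset[OF assms(6) A])
qed

end
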